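(* For every $i$ with $0\le i\le \rho(m)-1$, the sequence $x^{\alpha_i}$ satisfies $x^{\alpha_i}(k)=1$.
   Context: For $u\in\mathbb{R}$ let $\mathbf 1[u]=1$ if $u\ge 0$ and $\mathbf 1[u]=0$ if $u<0$. Let $m$ be a positive integer and let $\rho(m)$ denote the number of primes $p$ with $2m<p<3m$; assume $\rho(m)\ge 2$. List these primes as $p_0>p_1>\dots>p_{\rho(m)-1}$ and put $\alpha_i=3m-p_i$. Let $k=(6m-1)\rho(m)$, $\mu_i=\lfloor k/p_i\rfloor$, $\beta_i=k-p_i\mu_i$. Define weights $\bar a_j$, $1\le j\le k$: if $\rho(m)$ is even, $\bar a_j=2$ if $j=\ell p_i$ for some $i$ and some $\ell$ with $1\le \ell\le 3\rho(m)/2$, $\bar a_j=-2$ if $j=\ell p_i$ with $3\rho(m)/2<\ell\le 2\rho(m)$, and $\bar a_j=0$ otherwise; if $\rho(m)$ is odd, $\bar a_j=2$ if $j=\ell p_i$ with $1\le\ell\le (3\rho(m)-1)/2$, $\bar a_j=-2$ if $j=\ell p_i$ with $(3\rho(m)+1)/2\le \ell\le 2\rho(m)-2$, $\bar a_j=-1$ if $j=\ell p_i$ with $\ell\in\{2\rho(m)-1,2\rho(m)\}$, and $\bar a_j=0$ otherwise (well defined since the sets $\{\ell p_i:1\le\ell\le2\rho(m)\}$ are pairwise disjoint). Let $\bar\theta=2\rho(m)$. For each $i$ define $x^{\alpha_i}(t)$ for $0\le t\le k-1$ by $x^{\alpha_i}(t)=1$ if $t=\beta_i+\ell p_i$ for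 some $0\le \ell\le\mu_i-1$ and $x^{\alpha_i}(t)=0$ otherwise, and for $t\ge k$ by $x^{\alpha_i}(t)=\mathbf 1\big[\sum_{j=1}^k \bar a_j x^{\alpha_i}(t-j)-\bar\theta\big]$. *)

theory Defs
  imports "HOL-Computational_Algebra.Primes"
begin

definition prime_set :: "nat \<Rightarrow> nat set" where
  "prime_set m = {p. prime p \<and> 2*m < p \<and> p < 3*m}"

definition rho :: "nat \<Rightarrow> nat" where
  "rho m = card (prime_set m)"

definition pr :: "nat \<Rightarrow> nat \<Rightarrow> nat" where
  "pr m i = rev (sorted_list_of_set (prime_set m)) ! i"

definition alpha :: "nat \<Rightarrow> nat \<Rightarrow> nat" where
  "alpha m i = 3*m - pr m i"

definition kk :: "nat \<Rightarrow> nat" where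
  "kk m = (6*m - 1) * rho m"

definition mu :: "nat \<Rightarrow> nat \<Rightarrow> nat" where
  "mu m i = kk m div pr m i"

definition beta :: "nat \<Rightarrow> nat \<Rightarrow> nat" where
  "beta m i = kk m - pr m i * mu m i"

text \<open>Weights \<open>a_j\<close>; the sets of multiples are pairwise disjoint, so the case
  distinction below agrees with the paper's definition.\<close>
definition abar :: "nat \<Rightarrow> nat \<Rightarrow> int" where
  "abar m j =
    (let r = rho m;
         M = (\<lambda>P. \<exists>i<r. \<exists>l. P l \<and> j = l * pr m i) in
     if even r then
       (if M (\<lambda>l. 1 \<le> l \<and> 2*l \<le> 3*r) then 2
        else if M (\<lambda>l. 3*r < 2*l \<and> l \<le> 2*r) then -2
        else 0)
     else
       (if M (\<lambda>l. 1 \<le> l \<and> 2*l \<le> 3*r - 1) then 2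
        else if M (\<lambda>l. 3*r + 1 \<le> 2*l \<and> l \<le> 2*r - 2) then -2
        else if M (\<lambda>l. l = 2*r - 1 \<or> l = 2*r) then -1
        else 0))"

definition theta :: "nat \<Rightarrow> int" where
  "theta m = 2 * int (rho m)"

definition step :: "int \<Rightarrow> int" where
  "step u = (if u \<ge> 0 then 1 else 0)"

function xs :: "nat \<Rightarrow> nat \<Rightarrow> nat \<Rightarrow> int" where
  "xs m i t =
    (if t < kk m then (if \<exists>l<mu m i. t = beta m i + l * pr m i then 1 else 0)
     else step ((\<Sum>j\<in>{1..kk m}. abar m j * xs m i (t - j)) - theta m))"
  by auto
termination
  by (relation "measure (\<lambda>(m,i,t). t)") auto

end

theory Submission
  imports Defs
begin

(* Fix i, write p = p_i, k = kk m and u = mu m i = k div p.  The initial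
   window of x^{alpha_i} has its ones exactly at the times beta_i + l p (l < u), so
   seen backwards from time k, x(k - j) = 1 iff j = q p with 1 <= q <= u.  Hence the
   recursive sum at time k picks up exactly the weights abar(q p), 1 <= q <= u.
   Because all primes p_i' lie in (2m, 3m) and rho m < m, a product q p with
   q <= 2 rho m is a multiple l p_i' with l <= 2 rho m only when l = q, so
   abar(q p) depends on q alone through the "weight profile" of the paper.  This
   profile vanishes beyond 2 rho, and over 1..2 rho it sums to 2 rho = theta; since
   u >= 2 rho the total equals theta and the threshold unit fires, x(k) = 1.
   The file first collects facts about the primes p_i, then the weight profile and
   its sum, then the combinatorics of the initial window, and finally lemma5. *)

declare xs.simps[simp del]

lemma finite_prime_set: "finite (prime_set m)"
  by (rule finite_subset[of _ "{..<3*m}"]) (auto simp: prime_set_def)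

lemma pr_in_prime_set:
  assumes "i < rho m"
  shows "prime (pr m i)" "2*m < pr m i" "pr m i < 3*m"
proof -
  have "pr m i \<in> prime_set m"
    using assms unfolding pr_def rho_def
    by (metis finite_prime_set length_rev length_sorted_list_of_set nth_mem set_rev
        sorted_list_of_set.set_sorted_key_list_of_set)
  then show "prime (pr m i)" "2*m < pr m i" "pr m i < 3*m"
    by (auto simp: prime_set_def)
qed

text \<open>There are fewer than \<open>m\<close> integers strictly between \<open>2m\<close> and \<open>3m\<close>.\<close>
lemma rho_le: "rho m \<le> m - 1"
proof -
  have "prime_set m \<subseteq> {2*m+1..<3*m}" by (auto simp: prime_set_def)
  then have "rho m \<le> card {2*m+1..<3*m}"
    unfolding rho_def by (intro card_mono) auto
  then show ?thesis by simp
qed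

text \<open>Small multiples of distinct \<open>p_i\<close> never collide: if \<open>q p_i = l p_i'\<close> with
  \<open>l \<le> 2 rho m\<close>, then \<open>l = q\<close>.  (Otherwise \<open>p_i\<close> divides \<open>l\<close>, but \<open>l < m < p_i\<close>.)\<close>
lemma small_multiples_coincide:
  assumes "i < rho m" "i' < rho m" "0 < q" "l \<le> 2 * rho m"
    and eq: "q * pr m i = l * pr m i'"
  shows "l = q"
proof (cases "pr m i = pr m i'")
  case True
  then show ?thesis
    using eq prime_gt_0_nat[OF pr_in_prime_set(1)[OF assms(1)]] by simp
next
  case False
  note p = pr_in_prime_set[OF assms(1)]
  have "\<not> pr m i dvd pr m i'"
    using False p(1) pr_in_prime_set(1)[OF assms(2)] by (metis primes_dvd_imp_eq)
  moreover have "pr m i dvd l * pr m i'" using eq by (metis dvd_triv_right)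
  ultimately have "pr m i dvd l" using p(1) by (metis prime_dvd_multD)
  moreover have "l > 0" using assms(3) eq p(1) by (metis gr0I mult_0 mult_is_0 not_prime_0)
  ultimately have "pr m i \<le> l" by (simp add: dvd_imp_le)
  then show ?thesis using assms(4) p(2) rho_le[of m] by linarith
qed

text \<open>The weight profile: the weight the paper assigns to the \<open>l\<close>-th multiple
  of any of the primes, as a function of \<open>r = rho m\<close> and \<open>l\<close>.\<close>
definition weight_profile :: "nat \<Rightarrow> nat \<Rightarrow> int" where
  "weight_profile r l = (if even r then
       (if 1 \<le> l \<and> 2*l \<le> 3*r then 2
        else if 3*r < 2*l \<and> l \<le> 2*r then -2
        else 0)
     else
       (if 1 \<le> l \<and> 2*l \<le> 3*r - 1 then 2
        else if 3*r + 1 \<le> 2*l \<and> l \<le> 2*r - 2 then -2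
        else if l = 2*r - 1 \<or> l = 2*r then -1
        else 0))"

lemma multiple_set_iff:
  assumes "i < rho m" "0 < q" "\<And>l. P l \<Longrightarrow> l \<le> 2 * rho m"
  shows "(\<exists>i'<rho m. \<exists>l. P l \<and> q * pr m i = l * pr m i') \<longleftrightarrow> P q"
  using small_multiples_coincide[OF assms(1) _ assms(2)] assms by blast

lemma abar_multiple:
  assumes "i < rho m" "0 < q"
  shows "abar m (q * pr m i) = weight_profile (rho m) q"
proof -
  note M = multiple_set_iff[OF assms]
  have e1: "(\<exists>i'<rho m. \<exists>l. (1 \<le> l \<and> 2*l \<le> 3*rho m) \<and> q * pr m i = l * pr m i')
      \<longleftrightarrow> (1 \<le> q \<and> 2*q \<le> 3*rho m)"
    by (intro M) auto
  have e2: "(\<exists>i'<rho m. \<exists>l. (3*rho m < 2*l \<and> l \<le> 2*rho m) \<and> q * pr m i = l * pr m i')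
      \<longleftrightarrow> (3*rho m < 2*q \<and> q \<le> 2*rho m)"
    by (intro M) auto
  have e3: "(\<exists>i'<rho m. \<exists>l. (1 \<le> l \<and> 2*l \<le> 3*rho m - 1) \<and> q * pr m i = l * pr m i')
      \<longleftrightarrow> (1 \<le> q \<and> 2*q \<le> 3*rho m - 1)"
    by (intro M) auto
  have e4: "(\<exists>i'<rho m. \<exists>l. (3*rho m + 1 \<le> 2*l \<and> l \<le> 2*rho m - 2) \<and> q * pr m i = l * pr m i')
      \<longleftrightarrow> (3*rho m + 1 \<le> 2*q \<and> q \<le> 2*rho m - 2)"
    by (intro M) auto
  have e5: "(\<exists>i'<rho m. \<exists>l. (l = 2*rho m - 1 \<or> l = 2*rho m) \<and> q * pr m i = l * pr m i')
      \<longleftrightarrow> (q = 2*rho m - 1 \<or> q = 2*rho m)"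
    by (intro M) auto
  show ?thesis
    by (cases "even (rho m)")
      (simp_all only: abar_def Let_def weight_profile_def e1 e2 e3 e4 e5 if_True if_False)
qed

text \<open>Over one full period \<open>1..2r\<close> the profile sums to \<open>2r\<close>: the positive block
  outweighs the negative one by exactly \<open>2r\<close> in both parity cases.\<close>
lemma weight_profile_period_sum:
  assumes "r \<ge> 2"
  shows "(\<Sum>q\<in>{1..2*r}. weight_profile r q) = 2 * int r"
proof (cases "even r")
  case True
  then obtain s where s: "r = 2*s" by auto
  have "(\<Sum>q\<in>{1..2*r}. weight_profile r q) = (\<Sum>q\<in>{1..3*s+s}. weight_profile r q)"
    using s by (simp add: algebra_simps)
  also have "\<dots> = (\<Sum>q\<in>{1..3*s}. weight_profile r q) + (\<Sum>q\<in>{3*s+1..3*s+s}. weight_profile r q)"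
    by (rule sum.ub_add_nat) simp
  also have "(\<Sum>q\<in>{1..3*s}. weight_profile r q) = (\<Sum>q\<in>{1..3*s}. 2)"
    by (rule sum.cong) (auto simp: weight_profile_def s)
  also have "(\<Sum>q\<in>{3*s+1..3*s+s}. weight_profile r q) = (\<Sum>q\<in>{3*s+1..3*s+s}. -2)"
    by (rule sum.cong) (auto simp: weight_profile_def s)
  finally show ?thesis using s by simp
next
  case False
  then obtain s where s: "r = 2*s+1" by (metis oddE)
  with assms have s1: "s \<ge> 1" by simp
  have "(\<Sum>q\<in>{1..2*r}. weight_profile r q)
      = (\<Sum>q\<in>{1..(3*s+1)+(s-1)+2}. weight_profile r q)"
    using s s1 by (simp add: algebra_simps)
  also have "\<dots> = (\<Sum>q\<in>{1..(3*s+1)+(s-1)}. weight_profile r q)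
      + (\<Sum>q\<in>{(3*s+1)+(s-1)+1..(3*s+1)+(s-1)+2}. weight_profile r q)"
    by (rule sum.ub_add_nat) simp
  also have "(\<Sum>q\<in>{1..(3*s+1)+(s-1)}. weight_profile r q)
      = (\<Sum>q\<in>{1..3*s+1}. weight_profile r q) + (\<Sum>q\<in>{3*s+1+1..(3*s+1)+(s-1)}. weight_profile r q)"
    by (rule sum.ub_add_nat) simp
  also have "(\<Sum>q\<in>{1..3*s+1}. weight_profile r q) = (\<Sum>q\<in>{1..3*s+1}. 2)"
    by (rule sum.cong) (auto simp: weight_profile_def s)
  also have "(\<Sum>q\<in>{3*s+1+1..(3*s+1)+(s-1)}. weight_profile r q)
      = (\<Sum>q\<in>{3*s+1+1..(3*s+1)+(s-1)}. -2)"
    by (rule sum.cong) (auto simp: weight_profile_def s)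
  also have "(\<Sum>q\<in>{(3*s+1)+(s-1)+1..(3*s+1)+(s-1)+2}. weight_profile r q)
      = (\<Sum>q\<in>{(3*s+1)+(s-1)+1..(3*s+1)+(s-1)+2}. -1)"
    by (rule sum.cong) (use s1 in \<open>auto simp: weight_profile_def s\<close>)
  finally show ?thesis using s s1 by simp
qed

text \<open>Since the profile vanishes beyond \<open>2r\<close>, any longer range sums to \<open>2r\<close> as well.\<close>
lemma weight_profile_sum:
  assumes "r \<ge> 2" "2*r \<le> u"
  shows "(\<Sum>q\<in>{1..u}. weight_profile r q) = 2 * int r"
proof -
  have "(\<Sum>q\<in>{1..u}. weight_profile r q)
      = (\<Sum>q\<in>{1..2*r}. weight_profile r q) + (\<Sum>q\<in>{2*r+1..2*r+(u-2*r)}. weight_profile r q)"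
    using assms(2) by (subst sum.ub_add_nat[symmetric]) auto
  also have "(\<Sum>q\<in>{2*r+1..2*r+(u-2*r)}. weight_profile r q) = 0"
    by (intro sum.neutral) (auto simp: weight_profile_def)
  finally show ?thesis using weight_profile_period_sum[OF assms(1)] by simp
qed

lemma backward_progression_iff:
  fixes k p u j :: nat
  assumes "p * u \<le> k" "j \<le> k"
  shows "(\<exists>l<u. k - j = (k - p*u) + l*p) \<longleftrightarrow> (\<exists>q\<in>{1..u}. j = q*p)"
proof
  assume "\<exists>l<u. k - j = (k - p*u) + l*p"
  then obtain l where l: "l < u" "k - j = (k - p*u) + l*p" by blast
  have "l*p \<le> p*u" using mult_le_mono1[of l u p] l(1) by (simp add: mult.commute)
  then have "j = p*u - l*p" using l(2) assms by arith
  then have "j = (u - l) * p" by (metis diff_mult_distrib mult.commute)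
  then show "\<exists>q\<in>{1..u}. j = q*p" using l(1) by (intro bexI[of _ "u - l"]) auto
next
  assume "\<exists>q\<in>{1..u}. j = q*p"
  then obtain q where q: "1 \<le> q" "q \<le> u" "j = q*p" by auto
  have "q*p \<le> p*u" using mult_le_mono1[of q u p] q(2) by (simp add: mult.commute)
  moreover have "(u - q)*p = p*u - q*p" by (metis diff_mult_distrib mult.commute)
  ultimately have "k - j = (k - p*u) + (u - q)*p" using q(3) assms by arith
  then show "\<exists>l<u. k - j = (k - p*u) + l*p" using q by (intro exI[of _ "u - q"]) auto
qed

lemma sum_over_multiples:
  fixes f :: "nat \<Rightarrow> int"
  assumes "0 < p" "u * p \<le> k"
  shows "(\<Sum>j\<in>{1..k}. if \<exists>q\<in>{1..u}. j = q*p then f j else 0) = (\<Sum>q\<in>{1..u}. f (q*p))"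
proof -
  define A where "A = (\<lambda>q. q*p) ` {1..u}"
  have "A \<subseteq> {1..k}"
  proof
    fix j assume "j \<in> A"
    then obtain q where q: "1 \<le> q" "q \<le> u" "j = q*p" by (auto simp: A_def)
    have "q*p \<le> u*p" using q(2) by (rule mult_le_mono1)
    then have "j \<le> k" using q(3) assms(2) by linarith
    moreover have "1 \<le> j" using q(1,3) assms(1) by simp
    ultimately show "j \<in> {1..k}" by simp
  qed
  then have "(\<Sum>j\<in>{1..k}. if j \<in> A then f j else 0) = sum f A"
    by (simp add: sum.If_cases Int_absorb1)
  also have "\<dots> = (\<Sum>q\<in>{1..u}. f (q*p))"
    unfolding A_def using assms(1) by (subst sum.reindex) (auto simp: inj_on_def)
  finally show ?thesis by (simp add: A_def image_iff)
qed

lemma xs_initial_window: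
  assumes "1 \<le> j" "j \<le> kk m"
  shows "xs m i (kk m - j) = (if \<exists>q\<in>{1..mu m i}. j = q * pr m i then 1 else 0)"
proof -
  have "pr m i * mu m i \<le> kk m" by (simp add: mu_def)
  then show ?thesis
    using assms backward_progression_iff[of "pr m i" "mu m i" "kk m" j]
    by (subst xs.simps) (simp add: beta_def)
qed

text \<open>The window is long enough to contain \<open>2 rho m\<close> multiples of \<open>p_i\<close>, since
  \<open>2 p_i \<le> 6m - 1\<close>.\<close>
lemma two_rho_le_mu:
  assumes "i < rho m"
  shows "2 * rho m \<le> mu m i"
proof -
  have p: "2 * pr m i \<le> 6*m - 1" "0 < pr m i" using pr_in_prime_set[OF assms] by linarith+
  have "2 * rho m * pr m i \<le> kk m"
    using mult_le_mono2[OF p(1), of "rho m"] by (simp add: kk_def algebra_simps)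
  then have "(2 * rho m * pr m i) div pr m i \<le> kk m div pr m i" by (rule div_le_mono)
  then show ?thesis using p(2) by (simp add: mu_def)
qed

theorem lemma5:
  fixes m i :: nat
  assumes "m > 0" and "rho m \<ge> 2" and "i < rho m"
  shows "xs m i (kk m) = 1"
proof -
  let ?p = "pr m i" and ?u = "mu m i"
  have p_pos: "0 < ?p" using pr_in_prime_set(2)[OF assms(3)] by linarith
  have u_fits: "?u * ?p \<le> kk m" by (simp add: mu_def mult.commute)
  have "(\<Sum>j\<in>{1..kk m}. abar m j * xs m i (kk m - j))
      = (\<Sum>j\<in>{1..kk m}. if \<exists>q\<in>{1..?u}. j = q * ?p then abar m j else 0)"
    by (intro sum.cong) (auto simp: xs_initial_window)
  also have "\<dots> = (\<Sum>q\<in>{1..?u}. abar m (q * ?p))"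
    by (rule sum_over_multiples[OF p_pos u_fits])
  also have "\<dots> = (\<Sum>q\<in>{1..?u}. weight_profile (rho m) q)"
    by (intro sum.cong) (auto simp: abar_multiple[OF assms(3)])
  also have "\<dots> = theta m"
    using weight_profile_sum[OF assms(2) two_rho_le_mu[OF assms(3)]] by (simp add: theta_def)
  finally show ?thesis
    using assms(2) by (subst xs.simps) (simp add: kk_def step_def)
qed

end
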